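(* Let $A$ be a T-brace, let $n$ be a natural number and suppose that $a\in\zeta_n(\star,A)\setminus\zeta(\star,A)$. If $a$ has infinite order in $(A,+)$, then $a\star a\neq 0$.
   Context: A (left) brace is a set $A$ with two operations $+$ and $\cdot$ such that $(A,+)$ is an abelian group, $(A,\cdot)$ is a group, and $a(b+c)=ab+ac-a$ for all $a,b,c\in A$. Put $a\star b=ab-a-b$. A subbrace is a subset which is a subgroup of both $(A,+)$ and $(A,\cdot)$; a subbrace $L$ is an ideal if $a\star z, z\star a\in L$ for all $a\in A$, $z\in L$, and then the quotient brace $A/L$ is defined. $A$ is a T-brace if whenever $I$ is an ideal of $J$ and $J$ is an ideal of $A$, then $I$ is an ideal of $A$. The $\star$-center is $\zeta(\star,A)=\{a: a\star x=x\star a=0\ \forall x\}$; the upper $\star$-central series is $\zeta_0(\star,A)=0$, $\zeta_{n+1}(\star,A)/\zeta_n(\star,A)=\zeta(\star,A/\zeta_n(\star,A))$. *)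

theory Defs
  imports "HOL-Algebra.Algebra"
begin

definition brace :: "('a, 'm) ring_scheme \<Rightarrow> bool" where
  "brace R \<longleftrightarrow> abelian_group R \<and> group R \<and>
     (\<forall>a\<in>carrier R. \<forall>b\<in>carrier R. \<forall>c\<in>carrier R.
        a \<otimes>\<^bsub>R\<^esub> (b \<oplus>\<^bsub>R\<^esub> c) = (a \<otimes>\<^bsub>R\<^esub> b) \<oplus>\<^bsub>R\<^esub> (a \<otimes>\<^bsub>R\<^esub> c) \<ominus>\<^bsub>R\<^esub> a)"

definition bstar :: "('a, 'm) ring_scheme \<Rightarrow> 'a \<Rightarrow> 'a \<Rightarrow> 'a" where
  "bstar R a b = (a \<otimes>\<^bsub>R\<^esub> b) \<ominus>\<^bsub>R\<^esub> a \<ominus>\<^bsub>R\<^esub> b"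

definition subbrace :: "('a, 'm) ring_scheme \<Rightarrow> 'a set \<Rightarrow> bool" where
  "subbrace R L \<longleftrightarrow> subgroup L (add_monoid R) \<and> subgroup L R"

definition brace_ideal :: "('a, 'm) ring_scheme \<Rightarrow> 'a set \<Rightarrow> bool" where
  "brace_ideal R L \<longleftrightarrow> subbrace R L \<and>
     (\<forall>a\<in>carrier R. \<forall>z\<in>L. bstar R a z \<in> L \<and> bstar R z a \<in> L)"

text \<open>T-brace: ideals of ideals are ideals. An ideal I of J is an ideal of the
  brace J (the substructure with carrier J).\<close>

definition T_brace :: "('a, 'm) ring_scheme \<Rightarrow> bool" where
  "T_brace R \<longleftrightarrow> brace R \<and>
     (\<forall>I J. brace_ideal R J \<and> brace_ideal (R\<lparr>carrier := J\<rparr>) I \<longrightarrow> brace_ideal R I)"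

definition star_center :: "('a, 'm) ring_scheme \<Rightarrow> 'a set" where
  "star_center R = {a \<in> carrier R. \<forall>x\<in>carrier R.
       bstar R a x = \<zero>\<^bsub>R\<^esub> \<and> bstar R x a = \<zero>\<^bsub>R\<^esub>}"

definition bcoset :: "('a, 'm) ring_scheme \<Rightarrow> 'a set \<Rightarrow> 'a \<Rightarrow> 'a set" where
  "bcoset R L a = {a \<oplus>\<^bsub>R\<^esub> z | z. z \<in> L}"

definition brep :: "'a set \<Rightarrow> 'a" where
  "brep S = (SOME s. s \<in> S)"

definition quotient_brace :: "('a, 'm) ring_scheme \<Rightarrow> 'a set \<Rightarrow> 'a set ring" where
  "quotient_brace R L =
     \<lparr> partial_object.carrier = bcoset R L ` carrier R,
       monoid.mult = (\<lambda>U V. bcoset R L (brep U \<otimes>\<^bsub>R\<^esub> brep V)),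
       monoid.one = bcoset R L \<one>\<^bsub>R\<^esub>,
       ring.zero = bcoset R L \<zero>\<^bsub>R\<^esub>,
       ring.add = (\<lambda>U V. bcoset R L (brep U \<oplus>\<^bsub>R\<^esub> brep V)) \<rparr>"

fun star_zeta :: "('a, 'm) ring_scheme \<Rightarrow> nat \<Rightarrow> 'a set" where
  "star_zeta R 0 = {\<zero>\<^bsub>R\<^esub>}"
| "star_zeta R (Suc n) = {a \<in> carrier R.
      bcoset R (star_zeta R n) a \<in> star_center (quotient_brace R (star_zeta R n))}"

end

theory Submission
  imports Defs
begin

(* By induction on n we show that every a in zeta_n with a star a = 0 and of infinite additive
   order is star-central.  Since a star a = 0, the operation star vanishes on the additive cyclic
   group C = Z a, so C is a subbrace on which product and sum agree.  If a lies in zeta_(m+1),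
   the sets J_i = C + zeta_i satisfy J_0 = C, J_i is an ideal of J_(i+1), and J_m, being
   contained in zeta_(m+1), is an ideal of A; the T-property therefore makes C an ideal of A.
   Hence x star a = t a for some integer t, and t a lies in zeta_m, so by induction t a is
   star-central; but x star (t a) = t^2 a, which forces t = 0.  The same argument applies to
   a star x, because c |-> c star x is additive on the ideal C. *)

no_notation Sum_Type.Plus (infixr \<open><+>\<close> 65)

locale left_brace = abelian_group R + group R for R :: "('a, 'm) ring_scheme" (structure) +
  assumes brace_distrib: "\<lbrakk>a \<in> carrier R; b \<in> carrier R; c \<in> carrier R\<rbrakk> \<Longrightarrow>
     a \<otimes> (b \<oplus> c) = a \<otimes> b \<oplus> a \<otimes> c \<ominus> a"

lemma brace_iff_left_brace: "brace R \<longleftrightarrow> left_brace R"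
  unfolding brace_def left_brace_def left_brace_axioms_def by blast

context left_brace
begin

abbreviation star :: "'a \<Rightarrow> 'a \<Rightarrow> 'a" (infixl \<open>\<star>\<close> 70)
  where "a \<star> b \<equiv> bstar R a b"

lemma a_cancel:
  assumes "x \<in> carrier R" "y \<in> carrier R" "z \<in> carrier R" "w \<in> carrier R"
  shows "x \<oplus> (\<ominus> x \<oplus> y) = y" "x \<oplus> (y \<oplus> \<ominus> x) = y" "\<ominus> x \<oplus> (y \<oplus> x) = y"
    "x \<oplus> (y \<oplus> (\<ominus> x \<oplus> z)) = y \<oplus> z" "x \<oplus> (y \<oplus> (z \<oplus> \<ominus> x)) = y \<oplus> z"
    "\<ominus> x \<oplus> (y \<oplus> (x \<oplus> z)) = y \<oplus> z" "\<ominus> x \<oplus> (y \<oplus> (z \<oplus> x)) = y \<oplus> z"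
    "x \<oplus> (y \<oplus> (w \<oplus> (\<ominus> x \<oplus> z))) = y \<oplus> (w \<oplus> z)"
    "x \<oplus> (y \<oplus> (w \<oplus> (z \<oplus> \<ominus> x))) = y \<oplus> (w \<oplus> z)"
    "\<ominus> x \<oplus> (y \<oplus> (w \<oplus> (x \<oplus> z))) = y \<oplus> (w \<oplus> z)"
    "\<ominus> x \<oplus> (y \<oplus> (w \<oplus> (z \<oplus> x))) = y \<oplus> (w \<oplus> z)"
  using assms by (simp_all add: a_lcomm[of y "\<ominus> x"] a_lcomm[of w "\<ominus> x"] a_lcomm[of y x]
      a_lcomm[of w x] a_comm[of z "\<ominus> x"] a_comm[of y "\<ominus> x"] a_comm[of z x] a_comm[of y x]
      r_neg1 r_neg2)

lemma neg_zero [simp]: "\<ominus> \<zero> = \<zero>"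
  by (simp add: a_inv_def)

lemmas a_simps = minus_eq a_ac a_cancel r_neg l_neg minus_add neg_zero

lemma one_eq_zero: "\<one> = \<zero>"
proof -
  have "\<one> \<otimes> (\<zero> \<oplus> \<zero>) = \<one> \<otimes> \<zero> \<oplus> \<one> \<otimes> \<zero> \<ominus> \<one>"
    by (rule brace_distrib) auto
  then have "\<zero> = \<zero> \<ominus> \<one>" by simp
  then show ?thesis
    by (metis add.inv_closed add.inv_one add.l_one add.r_one minus_eq minus_minus one_closed
        zero_closed add.inv_solve_left)
qed

lemma mult_zero_right [simp]: "x \<in> carrier R \<Longrightarrow> x \<otimes> \<zero> = x"
  and mult_zero_left [simp]: "x \<in> carrier R \<Longrightarrow> \<zero> \<otimes> x = x"
  and inv_zero [simp]: "inv \<zero> = \<zero>"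
  by (simp_all flip: one_eq_zero)

lemma mult_inv_cancel_left [simp]:
  "x \<in> carrier R \<Longrightarrow> y \<in> carrier R \<Longrightarrow> x \<otimes> (inv x \<otimes> y) = y"
  "x \<in> carrier R \<Longrightarrow> y \<in> carrier R \<Longrightarrow> inv x \<otimes> (x \<otimes> y) = y"
  by (simp_all add: m_assoc[symmetric])

lemma star_closed [simp, intro]: "a \<in> carrier R \<Longrightarrow> b \<in> carrier R \<Longrightarrow> a \<star> b \<in> carrier R"
  by (simp add: bstar_def)

lemma star_zero_right [simp]: "x \<in> carrier R \<Longrightarrow> x \<star> \<zero> = \<zero>"
  and star_zero_left [simp]: "x \<in> carrier R \<Longrightarrow> \<zero> \<star> x = \<zero>"
  by (simp_all add: bstar_def a_simps)

lemma mult_eq_add_star: "a \<in> carrier R \<Longrightarrow> b \<in> carrier R \<Longrightarrow> a \<otimes> b = a \<oplus> a \<star> b \<oplus> b"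
  by (simp add: bstar_def a_simps)

lemma star_add_right:
  "\<lbrakk>x \<in> carrier R; b \<in> carrier R; c \<in> carrier R\<rbrakk> \<Longrightarrow> x \<star> (b \<oplus> c) = x \<star> b \<oplus> x \<star> c"
  by (simp add: bstar_def brace_distrib a_simps)

lemma star_neg_right:
  assumes "x \<in> carrier R" "b \<in> carrier R"
  shows "x \<star> (\<ominus> b) = \<ominus> (x \<star> b)"
proof (rule add.inv_equality[symmetric])
  show "x \<star> (\<ominus> b) \<oplus> x \<star> b = \<zero>"
    using assms by (simp flip: star_add_right add: l_neg)
qed (use assms in auto)

lemma star_int_pow_right:
  fixes k :: int
  assumes "x \<in> carrier R" "b \<in> carrier R"
  shows "x \<star> [k] \<cdot> b = [k] \<cdot> (x \<star> b)"
proof -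
  have "(\<star>) x \<in> hom (add_monoid R) (add_monoid R)"
    using assms by (intro homI) (simp_all add: star_add_right)
  then show ?thesis
    using assms hom_int_pow[of "(\<star>) x" "add_monoid R" "add_monoid R" b k] add.is_group
    by (simp add: add_pow_def)
qed

text \<open>The \<open>\<lambda>\<close>-map of brace theory, \<open>\<lambda>\<^sub>a(b) = -a + ab\<close>.\<close>

definition lambda_act :: "'a \<Rightarrow> 'a \<Rightarrow> 'a"
  where "lambda_act a b = a \<star> b \<oplus> b"

lemma lambda_act_closed [simp, intro]:
  "a \<in> carrier R \<Longrightarrow> b \<in> carrier R \<Longrightarrow> lambda_act a b \<in> carrier R"
  by (simp add: lambda_act_def)

lemma mult_eq_add_lambda_act: "a \<in> carrier R \<Longrightarrow> b \<in> carrier R \<Longrightarrow> a \<otimes> b = a \<oplus> lambda_act a b"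
  by (simp add: mult_eq_add_star lambda_act_def a_assoc)

lemma lambda_act_add:
  "\<lbrakk>x \<in> carrier R; b \<in> carrier R; c \<in> carrier R\<rbrakk> \<Longrightarrow>
    lambda_act x (b \<oplus> c) = lambda_act x b \<oplus> lambda_act x c"
  by (simp add: lambda_act_def star_add_right a_simps)

lemma lambda_act_one [simp]: "b \<in> carrier R \<Longrightarrow> lambda_act \<one> b = b"
  by (simp add: lambda_act_def one_eq_zero)

lemma lambda_act_mult:
  assumes x: "x \<in> carrier R" and y: "y \<in> carrier R" and b: "b \<in> carrier R"
  shows "lambda_act (x \<otimes> y) b = lambda_act x (lambda_act y b)"
proof -
  have "x \<otimes> y \<oplus> lambda_act (x \<otimes> y) b = x \<otimes> (y \<otimes> b)"
    using assms by (simp add: m_assoc flip: mult_eq_add_lambda_act)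
  also have "\<dots> = x \<oplus> lambda_act x y \<oplus> lambda_act x (lambda_act y b)"
    using assms by (simp add: mult_eq_add_lambda_act lambda_act_add a_assoc)
  also have "\<dots> = x \<otimes> y \<oplus> lambda_act x (lambda_act y b)"
    using assms by (simp add: mult_eq_add_lambda_act)
  finally show ?thesis
    using assms by (meson add.l_cancel lambda_act_closed m_closed)
qed

lemma lambda_act_inv_cancel [simp]:
  "x \<in> carrier R \<Longrightarrow> b \<in> carrier R \<Longrightarrow> lambda_act (inv x) (lambda_act x b) = b"
  "x \<in> carrier R \<Longrightarrow> b \<in> carrier R \<Longrightarrow> lambda_act x (lambda_act (inv x) b) = b"
  by (simp_all flip: lambda_act_mult)

lemma star_mult_left:
  assumes "x \<in> carrier R" "y \<in> carrier R" "c \<in> carrier R"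
  shows "(x \<otimes> y) \<star> c = x \<star> (y \<star> c) \<oplus> x \<star> c \<oplus> y \<star> c"
proof -
  have "(x \<otimes> y) \<star> c \<oplus> c = lambda_act (x \<otimes> y) c"
    by (simp add: lambda_act_def)
  also have "\<dots> = lambda_act x (lambda_act y c)"
    using assms by (rule lambda_act_mult)
  also have "\<dots> = (x \<star> (y \<star> c) \<oplus> x \<star> c \<oplus> y \<star> c) \<oplus> c"
    using assms by (simp add: lambda_act_def star_add_right a_simps)
  finally show ?thesis
    using assms by (simp add: add.r_cancel)
qed

lemma add_eq_mult_lambda_act: "a \<in> carrier R \<Longrightarrow> b \<in> carrier R \<Longrightarrow> a \<oplus> b = a \<otimes> lambda_act (inv a) b"
  by (simp add: mult_eq_add_lambda_act)

lemma minus_eq_lambda_act: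
  assumes "x \<in> carrier R" "y \<in> carrier R"
  shows "x \<ominus> y = lambda_act y (inv y \<otimes> x)"
proof -
  have "x = y \<otimes> (inv y \<otimes> x)"
    using assms by simp
  also have "\<dots> = y \<oplus> lambda_act y (inv y \<otimes> x)"
    using assms by (intro mult_eq_add_lambda_act) auto
  finally have "x \<ominus> y = y \<oplus> lambda_act y (inv y \<otimes> x) \<ominus> y"
    by simp
  then show ?thesis
    using assms by (simp add: a_simps)
qed

lemma inv_eq_star_neg_add_neg:
  assumes a: "a \<in> carrier R"
  shows "inv a = inv a \<star> (\<ominus> a) \<oplus> \<ominus> a"
proof -
  have "inv a \<oplus> lambda_act (inv a) a = \<zero>"
    using a by (simp add: one_eq_zero flip: mult_eq_add_lambda_act)
  then have inv_a: "\<ominus> lambda_act (inv a) a = inv a"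
    using a by (intro add.inv_equality) auto
  have "lambda_act (inv a) (\<ominus> a) \<oplus> lambda_act (inv a) a = lambda_act (inv a) (\<ominus> a \<oplus> a)"
    using a by (simp add: lambda_act_add)
  also have "\<dots> = \<zero>"
    using a by (simp add: l_neg lambda_act_def)
  finally have "\<ominus> lambda_act (inv a) a = lambda_act (inv a) (\<ominus> a)"
    using a by (intro add.inv_equality) auto
  with inv_a show ?thesis
    by (simp add: lambda_act_def)
qed

section \<open>Ideals\<close>

lemma brace_idealI:
  assumes sub: "L \<subseteq> carrier R" and zero: "\<zero> \<in> L"
    and add: "\<And>x y. x \<in> L \<Longrightarrow> y \<in> L \<Longrightarrow> x \<oplus> y \<in> L"
    and neg: "\<And>x. x \<in> L \<Longrightarrow> \<ominus> x \<in> L"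
    and mult: "\<And>x y. x \<in> L \<Longrightarrow> y \<in> L \<Longrightarrow> x \<otimes> y \<in> L"
    and inv: "\<And>x. x \<in> L \<Longrightarrow> inv x \<in> L"
    and star: "\<And>a z. a \<in> carrier R \<Longrightarrow> z \<in> L \<Longrightarrow> a \<star> z \<in> L \<and> z \<star> a \<in> L"
  shows "brace_ideal R L"
proof -
  have "subgroup L (add_monoid R)"
    by (rule add.subgroupI) (use sub zero add neg in \<open>auto simp: a_inv_def\<close>)
  moreover have "subgroup L R"
    by (rule subgroupI) (use sub zero mult inv in \<open>auto simp flip: one_eq_zero\<close>)
  ultimately show ?thesis
    unfolding brace_ideal_def subbrace_def using star by blast
qed

context
  fixes L assumes L: "brace_ideal R L"
begin

lemma ideal_add_subgroup: "subgroup L (add_monoid R)"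
  and ideal_mult_subgroup: "subgroup L R"
  using L unfolding brace_ideal_def subbrace_def by auto

lemma ideal_closed: "x \<in> L \<Longrightarrow> x \<in> carrier R"
  using subgroup.subset[OF ideal_mult_subgroup] by blast

lemma ideal_zero: "\<zero> \<in> L"
  using subgroup.one_closed[OF ideal_add_subgroup] by simp

lemma ideal_add: "x \<in> L \<Longrightarrow> y \<in> L \<Longrightarrow> x \<oplus> y \<in> L"
  using subgroup.m_closed[OF ideal_add_subgroup] by simp

lemma ideal_neg: "x \<in> L \<Longrightarrow> \<ominus> x \<in> L"
  using subgroup.m_inv_closed[OF ideal_add_subgroup] by (simp add: a_inv_def)

lemma ideal_mult: "x \<in> L \<Longrightarrow> y \<in> L \<Longrightarrow> x \<otimes> y \<in> L"
  using subgroup.m_closed[OF ideal_mult_subgroup] by simp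

lemma ideal_inv: "x \<in> L \<Longrightarrow> inv x \<in> L"
  using subgroup.m_inv_closed[OF ideal_mult_subgroup] by simp

lemma ideal_star_right: "a \<in> carrier R \<Longrightarrow> z \<in> L \<Longrightarrow> a \<star> z \<in> L"
  and ideal_star_left: "a \<in> carrier R \<Longrightarrow> z \<in> L \<Longrightarrow> z \<star> a \<in> L"
  using L unfolding brace_ideal_def by blast+

lemma ideal_lambda_act: "a \<in> carrier R \<Longrightarrow> z \<in> L \<Longrightarrow> lambda_act a z \<in> L"
  by (simp add: lambda_act_def ideal_add ideal_star_right)

lemma ideal_lambda_act_iff:
  "a \<in> carrier R \<Longrightarrow> z \<in> carrier R \<Longrightarrow> lambda_act a z \<in> L \<longleftrightarrow> z \<in> L"
  by (metis ideal_lambda_act inv_closed lambda_act_closed lambda_act_inv_cancel(1))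

lemma ideal_conj:
  assumes g: "g \<in> carrier R" and z: "z \<in> L"
  shows "inv g \<otimes> z \<otimes> g \<in> L"
proof -
  have zc: "z \<in> carrier R" using z by (rule ideal_closed)
  have "g \<oplus> lambda_act g (inv g \<otimes> z \<otimes> g) = g \<otimes> (inv g \<otimes> z \<otimes> g)"
    using g zc by (intro mult_eq_add_lambda_act[symmetric]) auto
  also have "\<dots> = z \<otimes> g"
    using g zc by (simp add: m_assoc)
  also have "\<dots> = g \<oplus> (z \<oplus> z \<star> g)"
    using g zc by (simp add: mult_eq_add_star a_ac)
  finally have "lambda_act g (inv g \<otimes> z \<otimes> g) = z \<oplus> z \<star> g"
    using g zc
    by (metis add.l_cancel lambda_act_closed m_closed inv_closed star_closed add.m_closed)
  moreover have "z \<oplus> z \<star> g \<in> L"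
    using g z by (simp add: ideal_add ideal_star_left)
  ultimately show ?thesis
    using g zc ideal_lambda_act_iff[of g "inv g \<otimes> z \<otimes> g"] by simp
qed

text \<open>The additive cosets of an ideal are also its multiplicative left cosets.\<close>

lemma ideal_minus_iff:
  "x \<in> carrier R \<Longrightarrow> y \<in> carrier R \<Longrightarrow> x \<ominus> y \<in> L \<longleftrightarrow> inv y \<otimes> x \<in> L"
  using minus_eq_lambda_act[of x y] ideal_lambda_act_iff[of y "inv y \<otimes> x"] by simp

lemma ideal_cong_add:
  assumes "x \<in> carrier R" "y \<in> carrier R" "x' \<in> carrier R" "y' \<in> carrier R"
    and "x \<ominus> y \<in> L" "x' \<ominus> y' \<in> L"
  shows "x \<oplus> x' \<ominus> (y \<oplus> y') \<in> L"
proof -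
  have "x \<oplus> x' \<ominus> (y \<oplus> y') = (x \<ominus> y) \<oplus> (x' \<ominus> y')"
    using assms by (simp add: a_simps)
  then show ?thesis
    using assms ideal_add by simp
qed

lemma ideal_cong_mult:
  assumes c: "x \<in> carrier R" "y \<in> carrier R" "x' \<in> carrier R" "y' \<in> carrier R"
    and h: "x \<ominus> y \<in> L" "x' \<ominus> y' \<in> L"
  shows "x \<otimes> x' \<ominus> y \<otimes> y' \<in> L"
proof -
  have "inv (y \<otimes> y') \<otimes> (x \<otimes> x') = (inv y' \<otimes> (inv y \<otimes> x) \<otimes> y') \<otimes> (inv y' \<otimes> x')"
    using c by (simp add: m_assoc inv_mult_group)
  also have "\<dots> \<in> L"
    using h c by (simp add: ideal_minus_iff ideal_mult ideal_conj)
  finally show ?thesis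
    using c by (simp add: ideal_minus_iff)
qed

lemma ideal_cong_inv:
  assumes c: "x \<in> carrier R" "y \<in> carrier R" and h: "x \<ominus> y \<in> L"
  shows "inv x \<ominus> inv y \<in> L"
proof -
  have "inv x \<otimes> y \<in> L"
    using h c ideal_inv[of "inv y \<otimes> x"] by (simp add: ideal_minus_iff inv_mult_group)
  then have "inv (inv x) \<otimes> (inv x \<otimes> y) \<otimes> inv x \<in> L"
    by (rule ideal_conj[rotated]) (use c in simp)
  then show ?thesis
    using c by (simp add: ideal_minus_iff m_assoc)
qed

lemma ideal_star_add_left:
  assumes u: "u \<in> L" and c: "v \<in> carrier R" "x \<in> carrier R" and h: "v \<star> x \<in> L"
  shows "(v \<oplus> u) \<star> x \<in> L"
proof -
  define w where "w = lambda_act (inv v) u"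
  have w: "w \<in> L" and wc: "w \<in> carrier R"
    unfolding w_def using u c ideal_closed by (auto intro: ideal_lambda_act)
  have "v \<oplus> u = v \<otimes> w"
    unfolding w_def using c u ideal_closed by (auto intro: add_eq_mult_lambda_act)
  then have "(v \<oplus> u) \<star> x = v \<star> (w \<star> x) \<oplus> v \<star> x \<oplus> w \<star> x"
    using c wc by (simp add: star_mult_left)
  also have "\<dots> \<in> L"
    using w c h wc by (simp add: ideal_add ideal_star_right ideal_star_left)
  finally show ?thesis .
qed

end

end

section \<open>The upper \<open>\<star>\<close>-central series\<close>

text \<open>The preimage in \<open>A\<close> of the \<open>\<star>\<close>-centre of \<open>A/L\<close>.\<close>

definition star_center_mod :: "('a, 'm) ring_scheme \<Rightarrow> 'a set \<Rightarrow> 'a set" where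
  "star_center_mod R L =
     {a \<in> carrier R. \<forall>x\<in>carrier R. bstar R a x \<in> L \<and> bstar R x a \<in> L}"

context left_brace
begin

lemma star_center_modI:
  "\<lbrakk>a \<in> carrier R; \<And>x. x \<in> carrier R \<Longrightarrow> a \<star> x \<in> L; \<And>x. x \<in> carrier R \<Longrightarrow> x \<star> a \<in> L\<rbrakk>
    \<Longrightarrow> a \<in> star_center_mod R L"
  by (simp add: star_center_mod_def)

lemma star_center_modD:
  assumes "a \<in> star_center_mod R L"
  shows "a \<in> carrier R" and "x \<in> carrier R \<Longrightarrow> a \<star> x \<in> L" and "x \<in> carrier R \<Longrightarrow> x \<star> a \<in> L"
  using assms by (simp_all add: star_center_mod_def)

context
  fixes L assumes L: "brace_ideal R L"
begin

lemma ideal_subset_star_center_mod: "L \<subseteq> star_center_mod R L"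
proof
  fix z assume z: "z \<in> L"
  show "z \<in> star_center_mod R L"
    using ideal_closed[OF L z] ideal_star_left[OF L _ z] ideal_star_right[OF L _ z]
    by (rule star_center_modI)
qed

lemma star_center_mod_mult:
  assumes a: "a \<in> star_center_mod R L" and b: "b \<in> star_center_mod R L"
  shows "a \<otimes> b \<in> star_center_mod R L"
proof (rule star_center_modI)
  note ac = star_center_modD(1)[OF a] and bc = star_center_modD(1)[OF b]
  fix x assume x: "x \<in> carrier R"
  show "(a \<otimes> b) \<star> x \<in> L"
    using ac bc x star_center_modD[OF a] star_center_modD[OF b]
    by (simp add: star_mult_left ideal_add[OF L] ideal_star_right[OF L])
  show "x \<star> (a \<otimes> b) \<in> L"
    using ac bc x star_center_modD[OF a] star_center_modD[OF b]
    by (simp add: mult_eq_add_star star_add_right ideal_add[OF L] ideal_star_right[OF L])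
qed (use a b star_center_modD in auto)

lemma star_center_mod_inv:
  assumes a: "a \<in> star_center_mod R L"
  shows "inv a \<in> star_center_mod R L"
proof (rule star_center_modI)
  note ac = star_center_modD(1)[OF a]
  fix x assume x: "x \<in> carrier R"
  have "\<zero> = (inv a \<otimes> a) \<star> x"
    using ac x by (simp add: one_eq_zero)
  also have "\<dots> = inv a \<star> (a \<star> x) \<oplus> inv a \<star> x \<oplus> a \<star> x"
    by (rule star_mult_left) (use ac x in auto)
  finally have "inv a \<star> x = \<ominus> (inv a \<star> (a \<star> x) \<oplus> a \<star> x)"
    using ac x by (intro add.inv_equality[symmetric]) (auto simp: a_ac)
  then show "inv a \<star> x \<in> L"
    using ac x star_center_modD[OF a]
    by (simp add: ideal_neg[OF L] ideal_add[OF L] ideal_star_right[OF L])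
  have "inv a = inv a \<star> (\<ominus> a) \<oplus> \<ominus> a"
    using ac by (rule inv_eq_star_neg_add_neg)
  then have "x \<star> inv a = x \<star> (inv a \<star> (\<ominus> a) \<oplus> \<ominus> a)"
    by (rule arg_cong)
  also have "\<dots> = x \<star> (inv a \<star> (\<ominus> a)) \<oplus> \<ominus> (x \<star> a)"
    using ac x by (simp add: star_add_right star_neg_right)
  finally have "x \<star> inv a = x \<star> (inv a \<star> (\<ominus> a)) \<oplus> \<ominus> (x \<star> a)" .
  moreover have "inv a \<star> (\<ominus> a) \<in> L"
    using ac star_center_modD[OF a] by (simp add: star_neg_right ideal_neg[OF L])
  ultimately show "x \<star> inv a \<in> L"
    using ac x star_center_modD[OF a]
    by (simp add: ideal_neg[OF L] ideal_add[OF L] ideal_star_right[OF L])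
qed (use a star_center_modD in auto)

lemma star_center_mod_add:
  assumes a: "a \<in> star_center_mod R L" and b: "b \<in> star_center_mod R L"
  shows "a \<oplus> b \<in> star_center_mod R L"
proof (rule star_center_modI)
  note ac = star_center_modD(1)[OF a] and bc = star_center_modD(1)[OF b]
  fix x assume x: "x \<in> carrier R"
  show "x \<star> (a \<oplus> b) \<in> L"
    using ac bc x star_center_modD[OF a] star_center_modD[OF b]
    by (simp add: star_add_right ideal_add[OF L])
  define c where "c = lambda_act (inv a) b"
  have "c = b \<oplus> inv a \<star> b"
    unfolding c_def lambda_act_def using ac bc by (simp add: a_comm)
  then have "c \<star> x \<in> L"
    using ideal_star_add_left[OF L _ bc x] star_center_modD(2,3)[OF b] ac x by simp
  moreover have "a \<oplus> b = a \<otimes> c"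
    unfolding c_def using ac bc by (rule add_eq_mult_lambda_act)
  ultimately show "(a \<oplus> b) \<star> x \<in> L"
    using ac bc x star_center_modD[OF a] unfolding c_def
    by (simp add: star_mult_left ideal_add[OF L] ideal_star_right[OF L])
qed (use a b star_center_modD in auto)

lemma star_center_mod_neg:
  assumes a: "a \<in> star_center_mod R L"
  shows "\<ominus> a \<in> star_center_mod R L"
proof (rule star_center_modI)
  note ac = star_center_modD(1)[OF a]
  fix x assume x: "x \<in> carrier R"
  show "x \<star> (\<ominus> a) \<in> L"
    using ac x star_center_modD[OF a] by (simp add: star_neg_right ideal_neg[OF L])
  define b where "b = inv a \<star> (\<ominus> a)"
  have b: "\<ominus> b \<in> L"
    unfolding b_def using ac star_center_modD[OF a] by (simp add: star_neg_right)
  have "inv a = b \<oplus> \<ominus> a"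
    unfolding b_def using ac by (rule inv_eq_star_neg_add_neg)
  moreover have "b \<in> carrier R"
    unfolding b_def using ac by simp
  ultimately have "inv a \<oplus> \<ominus> b = \<ominus> a"
    using ac by (simp add: a_simps)
  moreover have "(inv a \<oplus> \<ominus> b) \<star> x \<in> L"
    using ac x b star_center_modD(2)[OF star_center_mod_inv[OF a] x]
    by (intro ideal_star_add_left[OF L]) auto
  ultimately show "(\<ominus> a) \<star> x \<in> L"
    by simp
qed (use a star_center_modD in auto)

lemma star_center_mod_ideal: "brace_ideal R (star_center_mod R L)"
proof (rule brace_idealI)
  show "star_center_mod R L \<subseteq> carrier R"
    using star_center_modD(1) by blast
  show "\<zero> \<in> star_center_mod R L"
    using ideal_subset_star_center_mod ideal_zero[OF L] by blast
  fix a z assume "a \<in> carrier R" "z \<in> star_center_mod R L"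
  then show "a \<star> z \<in> star_center_mod R L \<and> z \<star> a \<in> star_center_mod R L"
    using ideal_subset_star_center_mod star_center_modD by blast
qed (simp_all add: star_center_mod_add star_center_mod_neg star_center_mod_mult star_center_mod_inv)

lemma bcoset_eq_iff:
  assumes a: "a \<in> carrier R" and b: "b \<in> carrier R"
  shows "bcoset R L a = bcoset R L b \<longleftrightarrow> a \<ominus> b \<in> L"
proof
  assume "bcoset R L a = bcoset R L b"
  moreover have "a \<in> bcoset R L a"
    unfolding bcoset_def using a ideal_zero[OF L] by (auto intro!: exI[of _ \<zero>])
  ultimately obtain z where z: "z \<in> L" "a = b \<oplus> z"
    unfolding bcoset_def by auto
  then show "a \<ominus> b \<in> L"
    using b ideal_closed[OF L] by (simp add: a_simps)
next
  assume ab: "a \<ominus> b \<in> L"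
  have "b \<oplus> z \<in> bcoset R L a" if z: "z \<in> L" for z
  proof -
    have "b \<oplus> z = a \<oplus> (\<ominus> (a \<ominus> b) \<oplus> z)"
      using a b z ideal_closed[OF L] by (simp add: a_simps)
    moreover have "\<ominus> (a \<ominus> b) \<oplus> z \<in> L"
      using ab z by (simp add: ideal_add[OF L] ideal_neg[OF L])
    ultimately show ?thesis
      unfolding bcoset_def by auto
  qed
  moreover have "a \<oplus> z \<in> bcoset R L b" if z: "z \<in> L" for z
  proof -
    have "a \<oplus> z = b \<oplus> ((a \<ominus> b) \<oplus> z)"
      using a b z ideal_closed[OF L] by (simp add: a_simps)
    moreover have "(a \<ominus> b) \<oplus> z \<in> L"
      using ab z by (simp add: ideal_add[OF L])
    ultimately show ?thesis
      unfolding bcoset_def by auto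
  qed
  ultimately show "bcoset R L a = bcoset R L b"
    unfolding bcoset_def by blast
qed

lemma brep_bcoset:
  assumes a: "a \<in> carrier R"
  shows "brep (bcoset R L a) \<in> carrier R" and "brep (bcoset R L a) \<ominus> a \<in> L"
proof -
  have "a \<oplus> \<zero> \<in> bcoset R L a"
    unfolding bcoset_def using ideal_zero[OF L] by blast
  then have "brep (bcoset R L a) \<in> bcoset R L a"
    unfolding brep_def by (rule someI)
  then obtain z where z: "z \<in> L" "brep (bcoset R L a) = a \<oplus> z"
    unfolding bcoset_def by auto
  then show "brep (bcoset R L a) \<in> carrier R" and "brep (bcoset R L a) \<ominus> a \<in> L"
    using a ideal_closed[OF L] by (simp_all add: a_simps)
qed

lemma quotient_add:
  "a \<in> carrier R \<Longrightarrow> b \<in> carrier R \<Longrightarrow>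
    bcoset R L a \<oplus>\<^bsub>quotient_brace R L\<^esub> bcoset R L b = bcoset R L (a \<oplus> b)"
  unfolding quotient_brace_def
  by (simp add: bcoset_eq_iff brep_bcoset ideal_cong_add[OF L])

lemma quotient_mult:
  "a \<in> carrier R \<Longrightarrow> b \<in> carrier R \<Longrightarrow>
    bcoset R L a \<otimes>\<^bsub>quotient_brace R L\<^esub> bcoset R L b = bcoset R L (a \<otimes> b)"
  unfolding quotient_brace_def
  by (simp add: bcoset_eq_iff brep_bcoset ideal_cong_mult[OF L])

lemma quotient_neg:
  assumes a: "a \<in> carrier R"
  shows "\<ominus>\<^bsub>quotient_brace R L\<^esub> bcoset R L a = bcoset R L (\<ominus> a)"
proof -
  let ?A = "add_monoid (quotient_brace R L)"
  have "m_inv ?A (bcoset R L a) = bcoset R L (\<ominus> a)"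
    unfolding m_inv_def
  proof (rule the_equality)
    show "bcoset R L (\<ominus> a) \<in> carrier ?A \<and>
        bcoset R L a \<otimes>\<^bsub>?A\<^esub> bcoset R L (\<ominus> a) = \<one>\<^bsub>?A\<^esub> \<and>
        bcoset R L (\<ominus> a) \<otimes>\<^bsub>?A\<^esub> bcoset R L a = \<one>\<^bsub>?A\<^esub>"
      using a quotient_add by (simp add: quotient_brace_def r_neg l_neg)
    fix y
    assume "y \<in> carrier ?A \<and> bcoset R L a \<otimes>\<^bsub>?A\<^esub> y = \<one>\<^bsub>?A\<^esub> \<and>
        y \<otimes>\<^bsub>?A\<^esub> bcoset R L a = \<one>\<^bsub>?A\<^esub>"
    then obtain b where b: "b \<in> carrier R" "y = bcoset R L b"
      and "bcoset R L (b \<oplus> a) = bcoset R L \<zero>"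
      using a quotient_add by (auto simp: quotient_brace_def)
    then have "b \<ominus> \<ominus> a \<in> L"
      using a by (simp add: bcoset_eq_iff a_simps)
    then show "y = bcoset R L (\<ominus> a)"
      using a b by (simp add: bcoset_eq_iff)
  qed
  then show ?thesis
    by (simp add: a_inv_def)
qed

lemma quotient_star:
  "a \<in> carrier R \<Longrightarrow> x \<in> carrier R \<Longrightarrow>
    bstar (quotient_brace R L) (bcoset R L a) (bcoset R L x) = bcoset R L (a \<star> x)"
  by (simp add: bstar_def a_minus_def quotient_add quotient_mult quotient_neg)

lemma star_center_quotient_preimage:
  "{a \<in> carrier R. bcoset R L a \<in> star_center (quotient_brace R L)} = star_center_mod R L"
proof -
  have carrier_Q: "carrier (quotient_brace R L) = bcoset R L ` carrier R"
    and zero_Q: "\<zero>\<^bsub>quotient_brace R L\<^esub> = bcoset R L \<zero>"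
    by (simp_all add: quotient_brace_def)
  have star_Q: "bstar (quotient_brace R L) (bcoset R L u) (bcoset R L v) = \<zero>\<^bsub>quotient_brace R L\<^esub>
      \<longleftrightarrow> u \<star> v \<in> L"
    if "u \<in> carrier R" "v \<in> carrier R" for u v
    using that by (simp add: quotient_star zero_Q bcoset_eq_iff a_simps)
  have "bcoset R L a \<in> star_center (quotient_brace R L) \<longleftrightarrow> a \<in> star_center_mod R L"
    if a: "a \<in> carrier R" for a
    using a by (auto simp: star_center_def star_center_mod_def carrier_Q star_Q)
  then show ?thesis
    using star_center_modD(1) by blast
qed

end

lemma star_zeta_ideal: "brace_ideal R (star_zeta R n)"
  and star_zeta_Suc: "star_zeta R (Suc n) = star_center_mod R (star_zeta R n)"
proof (induction n)
  case 0
  show "brace_ideal R (star_zeta R 0)"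
    by (rule brace_idealI) auto
  then show "star_zeta R (Suc 0) = star_center_mod R (star_zeta R 0)"
    by (simp add: star_center_quotient_preimage)
next
  case (Suc n)
  then show "brace_ideal R (star_zeta R (Suc n))"
    by (simp add: star_center_mod_ideal)
  then show "star_zeta R (Suc (Suc n)) = star_center_mod R (star_zeta R (Suc n))"
    by (simp only: star_zeta.simps(2) star_center_quotient_preimage)
qed

section \<open>Sums of an ideal and a \<open>\<star>\<close>-trivial subgroup\<close>

lemma star_restrict_carrier:
  assumes "subgroup H (add_monoid R)" "x \<in> H" "y \<in> H"
  shows "bstar (R\<lparr>carrier := H\<rparr>) x y = x \<star> y"
proof -
  have "add_monoid (R\<lparr>carrier := H\<rparr>) = (add_monoid R)\<lparr>carrier := H\<rparr>"
    by simp
  then have "\<ominus>\<^bsub>R\<lparr>carrier := H\<rparr>\<^esub> z = \<ominus> z" if "z \<in> H" for z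
    using add.m_inv_consistent[OF assms(1) that] by (simp add: a_inv_def)
  then show ?thesis
    using assms(2,3) by (simp add: bstar_def a_minus_def)
qed

lemma mem_set_add_iff:
  assumes C: "C \<subseteq> carrier R" and L: "L \<subseteq> carrier R"
  shows "x \<in> C <+> L \<longleftrightarrow> x \<in> carrier R \<and> (\<exists>c\<in>C. x \<ominus> c \<in> L)"
proof
  assume "x \<in> C <+> L"
  then obtain c l where cl: "c \<in> C" "l \<in> L" and x: "x = c \<oplus> l"
    unfolding set_add_def' by blast
  have "c \<in> carrier R" "l \<in> carrier R"
    using cl C L by auto
  then have "x \<in> carrier R" "x \<ominus> c = l"
    unfolding x by (simp_all add: a_simps)
  with cl show "x \<in> carrier R \<and> (\<exists>c\<in>C. x \<ominus> c \<in> L)"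
    by auto
next
  assume "x \<in> carrier R \<and> (\<exists>c\<in>C. x \<ominus> c \<in> L)"
  then obtain c where x: "x \<in> carrier R" and c: "c \<in> C" "x \<ominus> c \<in> L"
    by blast
  have "x = c \<oplus> (x \<ominus> c)"
    using x c C by (simp add: a_simps subset_iff)
  with c show "x \<in> C <+> L"
    unfolding set_add_def' by blast
qed

lemma mem_set_add_ideal_mult:
  assumes C: "C \<subseteq> carrier R" and L: "brace_ideal R L" and x: "x \<in> C <+> L"
  obtains c w where "c \<in> C" "w \<in> L" "x = c \<otimes> w"
proof -
  obtain c l where cl: "c \<in> C" "l \<in> L" and "x = c \<oplus> l"
    using x unfolding set_add_def' by blast
  moreover have cc: "c \<in> carrier R"
    using cl(1) C by blast
  ultimately have "x = c \<otimes> lambda_act (inv c) l"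
    using add_eq_mult_lambda_act ideal_closed[OF L cl(2)] by simp
  moreover have "lambda_act (inv c) l \<in> L"
    using ideal_lambda_act[OF L _ cl(2)] cc by simp
  ultimately show ?thesis
    using that cl by blast
qed

context
  fixes C
  assumes C: "subgroup C (add_monoid R)"
    and C_star: "\<And>c d. c \<in> C \<Longrightarrow> d \<in> C \<Longrightarrow> c \<star> d = \<zero>"
begin

lemma C_subset: "C \<subseteq> carrier R"
  using subgroup.subset[OF C] by simp

lemma C_closed: "c \<in> C \<Longrightarrow> c \<in> carrier R"
  using C_subset by blast

lemma trivial_mult_eq_add: "c \<in> C \<Longrightarrow> d \<in> C \<Longrightarrow> c \<otimes> d = c \<oplus> d"
  by (simp add: mult_eq_add_star C_star C_closed)

lemma trivial_inv_eq_neg: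
  assumes c: "c \<in> C"
  shows "inv c = \<ominus> c"
proof (rule inv_equality)
  have "\<ominus> c \<in> C"
    using subgroup.m_inv_closed[OF C c] by (simp add: a_inv_def)
  then show "\<ominus> c \<otimes> c = \<one>"
    using c by (simp add: trivial_mult_eq_add C_closed l_neg one_eq_zero)
qed (use c C_closed in auto)

lemma set_add_zero: "C <+> {\<zero>} = C"
proof -
  have "c \<oplus> \<zero> = c" if "c \<in> C" for c
    using C_closed[OF that] by simp
  then show ?thesis
    unfolding set_add_def' by auto
qed

lemma ideal_subset_set_add:
  assumes L: "brace_ideal R L"
  shows "L \<subseteq> C <+> L"
proof
  fix l assume l: "l \<in> L"
  have "\<zero> \<oplus> l \<in> C <+> L"
    unfolding set_add_def' using subgroup.one_closed[OF C] l by force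
  then show "l \<in> C <+> L"
    using ideal_closed[OF L l] by simp
qed

context
  fixes L assumes L: "brace_ideal R L"
begin

lemma mem_set_add_ideal_iff: "x \<in> C <+> L \<longleftrightarrow> x \<in> carrier R \<and> (\<exists>c\<in>C. x \<ominus> c \<in> L)"
  using mem_set_add_iff[OF C_subset] subgroup.subset[OF ideal_mult_subgroup[OF L]] by blast

lemma set_add_add_subgroup: "subgroup (C <+> L) (add_monoid R)"
  unfolding set_add_def by (rule add.mult_subgroups[OF C ideal_add_subgroup[OF L]])

lemma set_add_mult_subgroup: "subgroup (C <+> L) R"
proof (rule subgroupI)
  show "C <+> L \<subseteq> carrier R"
    using mem_set_add_ideal_iff by blast
  show "C <+> L \<noteq> {}"
    using subgroup.one_closed[OF set_add_add_subgroup] by auto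
next
  fix x assume "x \<in> C <+> L"
  then obtain c where x: "x \<in> carrier R" and c: "c \<in> C" "x \<ominus> c \<in> L"
    unfolding mem_set_add_ideal_iff by blast
  have "inv x \<ominus> inv c \<in> L"
    using ideal_cong_inv[OF L x C_closed[OF c(1)] c(2)] .
  moreover have "inv c \<in> C"
    using trivial_inv_eq_neg[OF c(1)] subgroup.m_inv_closed[OF C c(1)] by (simp add: a_inv_def)
  ultimately show "inv x \<in> C <+> L"
    unfolding mem_set_add_ideal_iff using x by blast
next
  fix x y assume "x \<in> C <+> L" "y \<in> C <+> L"
  then obtain c d where x: "x \<in> carrier R" "c \<in> C" "x \<ominus> c \<in> L"
    and y: "y \<in> carrier R" "d \<in> C" "y \<ominus> d \<in> L"
    unfolding mem_set_add_ideal_iff by blast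
  have "x \<otimes> y \<ominus> c \<otimes> d \<in> L"
    using ideal_cong_mult[OF L x(1) C_closed[OF x(2)] y(1) C_closed[OF y(2)] x(3) y(3)] .
  moreover have "c \<otimes> d \<in> C"
    using trivial_mult_eq_add[OF x(2) y(2)] subgroup.m_closed[OF C x(2) y(2)] by simp
  ultimately show "x \<otimes> y \<in> C <+> L"
    unfolding mem_set_add_ideal_iff using x y by blast
qed

end

lemma star_set_add_star_center_mod:
  assumes L: "brace_ideal R L" and y: "y \<in> C <+> star_center_mod R L" and z: "z \<in> C <+> L"
  shows "y \<star> z \<in> L \<and> z \<star> y \<in> L"
proof
  note Z = star_center_mod_ideal[OF L]
  obtain c z0 where c: "c \<in> C" "z0 \<in> star_center_mod R L" and y_add: "y = c \<oplus> z0"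
    using y unfolding set_add_def' by blast
  obtain c' z1 where c': "c' \<in> C" "z1 \<in> star_center_mod R L" and y_mult: "y = c' \<otimes> z1"
    using mem_set_add_ideal_mult[OF C_subset Z y] by blast
  obtain d w where d: "d \<in> C" "w \<in> L" and z_add: "z = d \<oplus> w"
    using z unfolding set_add_def' by blast
  obtain d' w1 where d': "d' \<in> C" "w1 \<in> L" and z_mult: "z = d' \<otimes> w1"
    using mem_set_add_ideal_mult[OF C_subset L z] by blast
  note carr = C_closed ideal_closed[OF L] ideal_closed[OF Z]
  have "y \<star> z = (c' \<otimes> z1) \<star> d \<oplus> y \<star> w"
    using c d c' carr by (simp add: z_add y_mult star_add_right)
  also have "\<dots> = c' \<star> (z1 \<star> d) \<oplus> c' \<star> d \<oplus> z1 \<star> d \<oplus> y \<star> w"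
    using c d c' carr by (simp add: star_mult_left)
  also have "\<dots> \<in> L"
    using c' d carr star_center_modD[OF c'(2)] y_mult
    by (simp add: C_star ideal_add[OF L] ideal_star_right[OF L])
  finally show "y \<star> z \<in> L" .
  have yc: "y \<in> carrier R"
    using c carr by (simp add: y_add)
  have "d' \<star> y = d' \<star> c \<oplus> d' \<star> z0"
    using c d' carr by (simp add: y_add star_add_right)
  then have "z \<star> y = d' \<star> (w1 \<star> y) \<oplus> (d' \<star> c \<oplus> d' \<star> z0) \<oplus> w1 \<star> y"
    using d' yc carr by (simp add: z_mult star_mult_left)
  also have "\<dots> \<in> L"
    using c d' yc carr star_center_modD[OF c(2)]
    by (simp add: C_star ideal_add[OF L] ideal_star_right[OF L] ideal_star_left[OF L])
  finally show "z \<star> y \<in> L" .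
qed

lemma set_add_ideal_of_set_add_star_center_mod:
  assumes L: "brace_ideal R L"
  shows "brace_ideal (R\<lparr>carrier := C <+> star_center_mod R L\<rparr>) (C <+> L)"
proof -
  let ?J = "C <+> star_center_mod R L"
  note Z = star_center_mod_ideal[OF L]
  have sub: "C <+> L \<subseteq> ?J"
    unfolding set_add_def using ideal_subset_star_center_mod[OF L]
    by (rule mono_set_mult[OF subset_refl])
  have "subgroup (C <+> L) ((add_monoid R)\<lparr>carrier := ?J\<rparr>)"
    using set_add_add_subgroup[OF L] set_add_add_subgroup[OF Z] sub
    by (rule add.subgroup_incl)
  moreover have "add_monoid (R\<lparr>carrier := ?J\<rparr>) = (add_monoid R)\<lparr>carrier := ?J\<rparr>"
    by simp
  moreover have "subgroup (C <+> L) (R\<lparr>carrier := ?J\<rparr>)"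
    using set_add_mult_subgroup[OF L] set_add_mult_subgroup[OF Z] sub
    by (rule subgroup_incl)
  moreover have "bstar (R\<lparr>carrier := ?J\<rparr>) y z \<in> C <+> L \<and> bstar (R\<lparr>carrier := ?J\<rparr>) z y \<in> C <+> L"
    if "y \<in> ?J" "z \<in> C <+> L" for y z
    using that star_set_add_star_center_mod[OF L] ideal_subset_set_add[OF L] sub
      star_restrict_carrier[OF set_add_add_subgroup[OF Z]]
    by (metis subsetD)
  ultimately show ?thesis
    unfolding brace_ideal_def subbrace_def by simp
qed

lemma set_add_ideal:
  assumes L: "brace_ideal R L" and C_center: "C \<subseteq> star_center_mod R L"
  shows "brace_ideal R (C <+> L)"
proof -
  have "C <+> L \<subseteq> star_center_mod R L"
    unfolding set_add_def'
    using C_center ideal_subset_star_center_mod[OF L] star_center_mod_add[OF L] by blast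
  then have "x \<star> z \<in> C <+> L \<and> z \<star> x \<in> C <+> L" if "x \<in> carrier R" "z \<in> C <+> L" for x z
    using that star_center_modD ideal_subset_set_add[OF L] by blast
  then show ?thesis
    using set_add_add_subgroup[OF L] set_add_mult_subgroup[OF L]
    unfolding brace_ideal_def subbrace_def by blast
qed

end

end

section \<open>Cyclic subgroups on which \<open>\<star>\<close> vanishes\<close>

lemma T_brace_ideal_chain:
  assumes T: "T_brace R"
    and top: "brace_ideal R (J m)"
    and step: "\<And>i. i < m \<Longrightarrow> brace_ideal (R\<lparr>carrier := J (Suc i)\<rparr>) (J i)"
  shows "brace_ideal R (J 0)"
  using top step
proof (induction m arbitrary: J)
  case 0
  then show ?case by simp
next
  case (Suc m)
  then have "brace_ideal R (J (Suc 0))"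
    using Suc.IH[of "\<lambda>i. J (Suc i)"] by simp
  with Suc.prems(2)[of 0] T show ?case
    unfolding T_brace_def by blast
qed

definition int_multiples :: "('a, 'm) ring_scheme \<Rightarrow> 'a \<Rightarrow> 'a set" where
  "int_multiples R a = range (\<lambda>k::int. [k] \<cdot>\<^bsub>R\<^esub> a)"

context left_brace
begin

lemma int_multiples_subgroup:
  assumes a: "a \<in> carrier R"
  shows "subgroup (int_multiples R a) (add_monoid R)"
  using add.subgroup_subgroup_generated[of "{a}"] add.carrier_subgroup_generated_by_singleton[OF a]
  by (simp add: int_multiples_def)

context
  fixes a assumes a: "a \<in> carrier R" and a_star_a: "a \<star> a = \<zero>"
begin

lemma inv_eq_neg_of_star_self_zero: "inv a = \<ominus> a"
proof -
  have "a \<otimes> \<ominus> a = a \<oplus> \<ominus> (a \<star> a) \<oplus> \<ominus> a"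
    using a by (simp add: mult_eq_add_star star_neg_right)
  then have "a \<otimes> \<ominus> a = \<one>"
    using a a_star_a by (simp add: one_eq_zero r_neg)
  then show ?thesis
    using a by (metis mult_inv_cancel_left(2) add.inv_closed inv_closed r_one)
qed

lemma inv_star_self_zero: "inv a \<star> a = \<zero>"
proof -
  have "\<zero> = (inv a \<otimes> a) \<star> a"
    using a by (simp add: one_eq_zero)
  also have "\<dots> = inv a \<star> (a \<star> a) \<oplus> inv a \<star> a \<oplus> a \<star> a"
    by (rule star_mult_left) (use a in auto)
  finally show ?thesis
    using a a_star_a by simp
qed

lemma star_int_pow_self:
  fixes k :: int
  shows "[k] \<cdot> a \<star> a = \<zero>"
proof (induction k rule: int_induct[where k = 0])
  case base
  show ?case using a by (simp add: add_pow_def)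
next
  case (step1 i)
  have c: "[i] \<cdot> a \<in> carrier R"
    using a by simp
  have "[(i + 1)] \<cdot> a = [i] \<cdot> a \<otimes> a"
    using a c step1.IH by (simp add: add.int_pow_mult mult_eq_add_star)
  then show ?case
    using a c step1.IH a_star_a by (simp add: star_mult_left)
next
  case (step2 i)
  have c: "[i] \<cdot> a \<in> carrier R"
    using a by simp
  have "[(i - 1)] \<cdot> a = [i] \<cdot> a \<otimes> inv a"
    using a c step2.IH
    by (simp add: add.int_pow_diff mult_eq_add_star inv_eq_neg_of_star_self_zero star_neg_right
        minus_eq)
  then show ?case
    using a c step2.IH a_star_a inv_star_self_zero by (simp add: star_mult_left)
qed

lemma star_int_multiples: "c \<in> int_multiples R a \<Longrightarrow> d \<in> int_multiples R a \<Longrightarrow> c \<star> d = \<zero>"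
  using a by (auto simp: int_multiples_def star_int_pow_right star_int_pow_self)

lemma int_multiples_ideal_of_star_zeta:
  assumes T: "T_brace R" and a_zeta: "a \<in> star_zeta R (Suc m)"
  shows "brace_ideal R (int_multiples R a)"
proof -
  let ?C = "int_multiples R a"
  let ?J = "\<lambda>i. ?C <+> star_zeta R i"
  note C = int_multiples_subgroup[OF a] and C_star = star_int_multiples
  have "?C \<subseteq> star_zeta R (Suc m)"
    unfolding int_multiples_def image_subset_iff
    using add.subgroup_int_pow_closed[OF ideal_add_subgroup[OF star_zeta_ideal] a_zeta] by blast
  then have "brace_ideal R (?J m)"
    using set_add_ideal[OF C C_star star_zeta_ideal] by (simp only: star_zeta_Suc)
  moreover have "brace_ideal (R\<lparr>carrier := ?J (Suc i)\<rparr>) (?J i)" for i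
    using set_add_ideal_of_set_add_star_center_mod[OF C C_star star_zeta_ideal]
    by (simp only: star_zeta_Suc)
  ultimately have "brace_ideal R (?J 0)"
    by (rule T_brace_ideal_chain[OF T])
  then show ?thesis
    using set_add_zero[OF C C_star] by simp
qed

lemma star_int_pow_left:
  fixes k :: int
  assumes C_ideal: "brace_ideal R (int_multiples R a)" and x: "x \<in> carrier R"
  shows "[k] \<cdot> a \<star> x = [k] \<cdot> (a \<star> x)"
proof -
  have hom: "(\<lambda>k. [k] \<cdot> a \<star> x) \<in> hom integer_group (add_monoid R)"
  proof (rule homI)
    fix k l :: int
    have c: "[k] \<cdot> a \<in> int_multiples R a" "[l] \<cdot> a \<in> int_multiples R a"
      by (simp_all add: int_multiples_def)
    have "[(k + l)] \<cdot> a = [k] \<cdot> a \<otimes> [l] \<cdot> a"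
      using a c trivial_mult_eq_add[OF int_multiples_subgroup[OF a] star_int_multiples]
      by (simp add: add.int_pow_mult)
    moreover have "[l] \<cdot> a \<star> x \<in> int_multiples R a"
      using ideal_star_left[OF C_ideal x c(2)] .
    ultimately show "[(k \<otimes>\<^bsub>integer_group\<^esub> l)] \<cdot> a \<star> x =
        ([k] \<cdot> a \<star> x) \<otimes>\<^bsub>add_monoid R\<^esub> ([l] \<cdot> a \<star> x)"
      using a x c star_int_multiples by (simp add: star_mult_left)
  qed (use a x in auto)
  show ?thesis
    using hom_int_pow[OF hom _ group_integer_group add.is_group, of 1 k] a x
    by (simp flip: add_pow_def)
qed

lemma star_int_multiples_square:
  assumes C_ideal: "brace_ideal R (int_multiples R a)" and x: "x \<in> carrier R"
  obtains t s :: int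
  where "x \<star> a = [t] \<cdot> a" "x \<star> [t] \<cdot> a = [(t * t)] \<cdot> a"
    and "a \<star> x = [s] \<cdot> a" "[s] \<cdot> a \<star> x = [(s * s)] \<cdot> a"
proof -
  have a_C: "a \<in> int_multiples R a"
    using add.int_pow_1[OF a] unfolding int_multiples_def by (metis rangeI)
  obtain t :: int where t: "x \<star> a = [t] \<cdot> a"
    using ideal_star_right[OF C_ideal x a_C] unfolding int_multiples_def by blast
  obtain s :: int where s: "a \<star> x = [s] \<cdot> a"
    using ideal_star_left[OF C_ideal x a_C] unfolding int_multiples_def by blast
  have "x \<star> [t] \<cdot> a = [(t * t)] \<cdot> a"
    using a x t by (simp add: star_int_pow_right add.int_pow_pow)
  moreover have "[s] \<cdot> a \<star> x = [(s * s)] \<cdot> a"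
    using a x s star_int_pow_left[OF C_ideal x] by (simp add: add.int_pow_pow)
  ultimately show ?thesis
    using that t s by blast
qed


end

lemma star_zeta_square_zero_imp_star_center:
  assumes T: "T_brace R"
  shows "\<lbrakk>a \<in> star_zeta R n; a \<star> a = \<zero>; \<And>t::int. t \<noteq> 0 \<Longrightarrow> [t] \<cdot> a \<noteq> \<zero>\<rbrakk>
    \<Longrightarrow> a \<in> star_center R"
proof (induction n arbitrary: a)
  case 0
  then show ?case
    by (simp add: star_center_def)
next
  case (Suc m)
  have a: "a \<in> carrier R"
    using ideal_closed[OF star_zeta_ideal Suc.prems(1)] .
  have a_zeta: "a \<in> star_center_mod R (star_zeta R m)"
    using Suc.prems(1) by (simp only: star_zeta_Suc)
  have central: "[t] \<cdot> a \<in> star_center R" if "[t] \<cdot> a \<in> star_zeta R m" for t :: int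
  proof (cases "t = 0")
    case True
    then show ?thesis
      by (simp add: add_pow_def star_center_def)
  next
    case False
    have "[s] \<cdot> ([t] \<cdot> a) \<noteq> \<zero>" if "s \<noteq> 0" for s :: int
      using Suc.prems(3)[of "t * s"] False that by (simp add: add.int_pow_pow[OF a])
    then show ?thesis
      using Suc.IH[OF that] star_int_multiples[OF a Suc.prems(2)] by (simp add: int_multiples_def)
  qed
  have vanish: "[t] \<cdot> a = \<zero>"
    if "[t] \<cdot> a \<in> star_zeta R m" and x: "x \<in> carrier R"
      and "[(t * t)] \<cdot> a = x \<star> [t] \<cdot> a \<or> [(t * t)] \<cdot> a = [t] \<cdot> a \<star> x" for t :: int and x
  proof -
    have "[(t * t)] \<cdot> a = \<zero>"
      using central[OF that(1)] x that(3) by (auto simp: star_center_def)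
    then have "t = 0"
      using Suc.prems(3)[of "t * t"] by auto
    then show ?thesis
      by (simp add: add_pow_def)
  qed
  have "x \<star> a = \<zero> \<and> a \<star> x = \<zero>" if x: "x \<in> carrier R" for x
  proof -
    have C_ideal: "brace_ideal R (int_multiples R a)"
      using int_multiples_ideal_of_star_zeta[OF a Suc.prems(2) T Suc.prems(1)] .
    obtain t s :: int where "x \<star> a = [t] \<cdot> a" "x \<star> [t] \<cdot> a = [(t * t)] \<cdot> a"
      and "a \<star> x = [s] \<cdot> a" "[s] \<cdot> a \<star> x = [(s * s)] \<cdot> a"
      by (rule star_int_multiples_square[OF a Suc.prems(2) C_ideal x])
    with vanish[of t x] vanish[of s x] star_center_modD(2,3)[OF a_zeta x] x show ?thesis
      by auto
  qed
  then show ?case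
    using a by (simp add: star_center_def)
qed

end

theorem lemma3p2:
  fixes R :: "('a, 'm) ring_scheme" and n :: nat and a :: 'a
  assumes "T_brace R"
    and "a \<in> star_zeta R n - star_center R"
    and "group.ord (add_monoid R) a = 0"
  shows "bstar R a a \<noteq> \<zero>\<^bsub>R\<^esub>"
proof
  assume a_star_a: "bstar R a a = \<zero>\<^bsub>R\<^esub>"
  interpret left_brace R
    using assms(1) by (simp add: T_brace_def brace_iff_left_brace)
  have a: "a \<in> carrier R"
    using assms(2) ideal_closed[OF star_zeta_ideal] by blast
  have "[t] \<cdot>\<^bsub>R\<^esub> a \<noteq> \<zero>\<^bsub>R\<^esub>" if "t \<noteq> 0" for t :: int
    using add.int_pow_eq_id[OF a, of t] assms(3) that by simp
  then have "a \<in> star_center R"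
    using star_zeta_square_zero_imp_star_center[OF assms(1)] assms(2) a_star_a by blast
  with assms(2) show False
    by simp
qed

end
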